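(* Let $d\geq 3$ and let $A\in\mathrm{Sym}^d(\mathbb{R}^n)$ be an orthogonal tensor. Then $n=1$ or $n=2$. Moreover, for $n=2$ the orthogonal tensors in $\mathrm{Sym}^d(\mathbb{R}^2)$ are exactly the tensors $(\rho,\dots,\rho)\cdot A_0$ with $\rho\in O(2)$, where $A_0$ is the symmetric tensor with entries \[ (A_0)_{i_1\dots i_d}=\begin{cases}(-1)^k & \text{if }\#\{j: i_j=2\}=2k,\\ 0&\text{otherwise.}\end{cases} \] Equivalently, these are the tensors associated with the forms $\rho^*\mathrm{Ch}_{d,2}$, $\rho\in O(2)$.
   Context: Orthogonal tensors: \begin{itemize} \item For a tensor $A\in\otimes_{j=1}^d\mathbb{R}^n$ and $u\in\mathbb{R}^n$, the contraction $A\times_j u$ is the order-$(d-1)$ tensor $\big(\sum_{i_j}a_{i_1\dots i_j\dots i_d}u_{i_j}\big)$. \item An $n\times n$ matrix ($d=2$) is orthogonal in the usual sense. \item For $d\geq 3$, an $n^d$-tensor $A$ is orthogonal if $A\times_j u$ is orthogonal for every $j=1,\dots,d$ and every unit vector $u\in\mathbb{R}^n$. \end{itemize} The group $O(n)\times\cdots\times O(n)$ acts by \[ \big((\rho^{(1)},\dots,\rho^{(d)})\cdot A\big)_{i_1\dots i_d}=\sum_{j_1,\dots,j_d}\rho^{(1)}_{i_1j_1}\cdots\rho^{(d)}_{i_dj_d}a_{j_1\dots j_d}. \] The binary Chebyshev form is $\mathrm{Ch}_{d,2}(x_1,x_2)=\sum_{k=0}^{\lfloor d/2\rfloor}\binom{d}{2k}(-1)^kx_1^{d-2k}x_2^{2k}$.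 For a form $p$ and $\rho\in O(2)$, $(\rho^*p)(x)=p(\rho^{-1}x)$. The symmetric tensor $A$ associated with a form $p$ satisfies $p(x)=\langle A,x\otimes\cdots\otimes x\rangle_F$. *)

theory Defs
  imports "HOL-Analysis.Analysis"
begin

text \<open>Tensors in the d-fold tensor power of R^n are represented as functions
  on index lists: an index is a list of length d with entries in 0..n-1
  (0-based; the paper's index 2 is our index 1). Only values on valid
  index lists matter.\<close>

definition tidx :: "nat \<Rightarrow> nat \<Rightarrow> nat list set" where
  "tidx n d = {is. length is = d \<and> set is \<subseteq> {..<n}}"

definition sym_tensor :: "nat \<Rightarrow> nat \<Rightarrow> (nat list \<Rightarrow> real) \<Rightarrow> bool" where
  "sym_tensor n d A \<longleftrightarrow>
     (\<forall>is \<in> tidx n d. \<forall>js \<in> tidx n d. mset is = mset js \<longrightarrow> A is = A js)"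

definition orth_matrix :: "nat \<Rightarrow> (nat \<Rightarrow> nat \<Rightarrow> real) \<Rightarrow> bool" where
  "orth_matrix n M \<longleftrightarrow>
     (\<forall>i<n. \<forall>l<n. (\<Sum>k<n. M i k * M l k) = (if i = l then 1 else 0))"

definition contract :: "nat \<Rightarrow> nat \<Rightarrow> (nat \<Rightarrow> real) \<Rightarrow> (nat list \<Rightarrow> real) \<Rightarrow> (nat list \<Rightarrow> real)" where
  "contract n j u A = (\<lambda>is. \<Sum>i<n. u i * A (take j is @ i # drop j is))"

fun orth_tensor :: "nat \<Rightarrow> nat \<Rightarrow> (nat list \<Rightarrow> real) \<Rightarrow> bool" where
  "orth_tensor n 0 A = False"
| "orth_tensor n (Suc 0) A = False"
| "orth_tensor n (Suc (Suc 0)) A = orth_matrix n (\<lambda>i k. A [i, k])"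
| "orth_tensor n (Suc (Suc (Suc d))) A =
     (\<forall>j < Suc (Suc (Suc d)). \<forall>u. (\<Sum>i<n. (u i)\<^sup>2) = 1 \<longrightarrow>
        orth_tensor n (Suc (Suc d)) (contract n j u A))"

definition tensor_act :: "nat \<Rightarrow> nat \<Rightarrow> (nat \<Rightarrow> nat \<Rightarrow> real) \<Rightarrow> (nat list \<Rightarrow> real) \<Rightarrow> (nat list \<Rightarrow> real)" where
  "tensor_act n d \<rho> T = (\<lambda>is. \<Sum>js \<in> tidx n d. (\<Prod>k<d. \<rho> (is ! k) (js ! k)) * T js)"

definition A0 :: "nat list \<Rightarrow> real" where
  "A0 is = (let m = count (mset is) 1 in if even m then (-1) ^ (m div 2) else 0)"

end

theory Submission
  imports Defs
begin

text \<open>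
  Contracting a symmetric orthogonal tensor with a unit vector gives a symmetric orthogonal tensor
  of one order less, so the bound on the dimension reduces to order 3. There the slices
  A_i = (a_ijk)_jk are symmetric orthogonal matrices, and contracting with (e_i + e_p) / sqrt 2
  shows that distinct slices anticommute. Hence (A_a A_b)_lc is antisymmetric in a, b and
  symmetric in b, c, so it vanishes for distinct a, b, c. With 0-based indices and A_0 A_0 = 1
  this gives a_1q2 = (A_0 A_0 A_1)_q2 = 0 for all q, contradicting the orthogonality of A_1 as
  soon as n \<ge> 3.

  In dimension 2, the symmetric tensor of the form Re (\<gamma> (x_1 + i x_2)^d) has the entries
  Re (\<gamma> i^k), k the number of indices equal to the second basis vector, and contracting it
  with a unit vector u multiplies \<gamma> by u_1 + i u_2; so it is orthogonal when |\<gamma>| = 1.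
  Conversely, by induction on d (the case d = 3 by direct computation, the step by matching the
  two slices through symmetry) every symmetric orthogonal tensor has this form. A rotation by r
  maps A_0 (that is \<gamma> = 1) to \<gamma> = r^d and a reflection maps it to \<gamma> = (cnj r)^d, so
  these tensors are exactly the O(2)-orbit of A_0.
\<close>

section \<open>Index lists\<close>

lemma tidx_0: "tidx n 0 = {[]}"
  by (auto simp: tidx_def)

lemma tidx_Suc: "tidx n (Suc d) = (\<lambda>(i, xs). i # xs) ` ({..<n} \<times> tidx n d)"
  unfolding tidx_def
  by (auto simp: image_def length_Suc_conv)

lemma Cons_in_tidx: "i < n \<Longrightarrow> xs \<in> tidx n d \<Longrightarrow> i # xs \<in> tidx n (Suc d)"
  by (simp add: tidx_def)

lemma mset_insert_nth: "mset (take j xs @ i # drop j xs) = add_mset i (mset xs)"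
  by (metis append_take_drop_id mset_append add_mset_add_single mset.simps(2)
      union_assoc union_commute)

lemma insert_nth_in_tidx:
  assumes "xs \<in> tidx n d" "j \<le> d" "i < n"
  shows "take j xs @ i # drop j xs \<in> tidx n (Suc d)"
  using assms by (auto simp: tidx_def dest: in_set_takeD in_set_dropD)

lemma sum_tidx_prod:
  fixes f :: "nat \<Rightarrow> nat \<Rightarrow> 'a::comm_semiring_1"
  shows "(\<Sum>xs\<in>tidx n d. \<Prod>k<d. f k (xs ! k)) = (\<Prod>k<d. \<Sum>j<n. f k j)"
proof (induction d arbitrary: f)
  case 0
  then show ?case by (simp add: tidx_0)
next
  case (Suc d)
  have inj: "inj_on (\<lambda>(i, xs). i # xs) ({..<n} \<times> tidx n d)"
    by (auto simp: inj_on_def)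
  have "(\<Sum>xs\<in>tidx n (Suc d). \<Prod>k<Suc d. f k (xs ! k))
      = (\<Sum>j<n. \<Sum>xs\<in>tidx n d. f 0 j * (\<Prod>k<d. f (Suc k) (xs ! k)))"
    unfolding tidx_Suc sum.reindex[OF inj]
    by (simp del: prod.lessThan_Suc
        add: sum.cartesian_product prod.lessThan_Suc_shift case_prod_unfold)
  also have "\<dots> = (\<Sum>j<n. f 0 j * (\<Prod>k<d. \<Sum>j<n. f (Suc k) j))"
    by (simp add: sum_distrib_left[symmetric] Suc[of "\<lambda>k. f (Suc k)"])
  also have "\<dots> = (\<Prod>k<Suc d. \<Sum>j<n. f k j)"
    by (simp del: prod.lessThan_Suc add: prod.lessThan_Suc_shift sum_distrib_right)
  finally show ?case .
qed

lemma prod_nth_if_eq: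
  fixes w :: "'a::comm_monoid_mult"
  shows "(\<Prod>k<length xs. if xs ! k = x then w else 1) = w ^ count (mset xs) x"
proof (induction xs)
  case (Cons y xs)
  then show ?case
    by (simp del: prod.lessThan_Suc add: prod.lessThan_Suc_shift)
qed simp

section \<open>Contractions\<close>

lemma contract_cong:
  assumes "\<forall>xs\<in>tidx n (Suc d). A xs = B xs" "j \<le> d" "xs \<in> tidx n d"
  shows "contract n j u A xs = contract n j u B xs"
  unfolding contract_def using assms insert_nth_in_tidx by (intro sum.cong) auto

lemma orth_tensor_cong:
  "\<forall>xs\<in>tidx n d. A xs = B xs \<Longrightarrow> orth_tensor n d A = orth_tensor n d B"
proof (induction n d A arbitrary: B rule: orth_tensor.induct)
  case (3 n A)
  have "[i, k] \<in> tidx n (Suc (Suc 0))" if "i < n" "k < n" for i k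
    using that by (simp add: tidx_def)
  with 3 show ?case
    unfolding orth_tensor.simps orth_matrix_def by (auto intro!: sum.cong)
next
  case (4 n d A)
  have "orth_tensor n (Suc (Suc d)) (contract n j u A)
      = orth_tensor n (Suc (Suc d)) (contract n j u B)"
    if "j < Suc (Suc (Suc d))" "(\<Sum>i<n. (u i)\<^sup>2) = 1" for j u
    using that 4 by (intro "4.IH") (auto intro: contract_cong)
  then show ?case by simp
qed simp_all

lemma orth_tensor_contract:
  assumes "orth_tensor n (Suc d) A" "2 \<le> d" "j \<le> d" "(\<Sum>i<n. (u i)\<^sup>2) = 1"
  shows "orth_tensor n d (contract n j u A)"
proof -
  obtain m where "d = Suc (Suc m)"
    using assms(2) by (metis add_2_eq_Suc le_Suc_ex)
  with assms show ?thesis by auto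
qed

lemma sym_tensor_contract:
  assumes "sym_tensor n (Suc d) A" "j \<le> d"
  shows "sym_tensor n d (contract n j u A)"
  unfolding sym_tensor_def contract_def
proof (intro ballI impI sum.cong refl)
  fix xs ys i assume "xs \<in> tidx n d" "ys \<in> tidx n d" "mset xs = mset ys" "i \<in> {..<n}"
  with assms have "take j xs @ i # drop j xs \<in> tidx n (Suc d)"
    "take j ys @ i # drop j ys \<in> tidx n (Suc d)"
    by (auto intro: insert_nth_in_tidx)
  with assms(1) \<open>mset xs = mset ys\<close>
  show "u i * A (take j xs @ i # drop j xs) = u i * A (take j ys @ i # drop j ys)"
    unfolding sym_tensor_def by (metis mset_insert_nth)
qed

definition std_basis :: "nat \<Rightarrow> nat \<Rightarrow> real" where
  "std_basis i x = (if x = i then 1 else 0)"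

lemma sum_std_basis_mult:
  assumes "i < n"
  shows "(\<Sum>x<n. std_basis i x * f x) = f i"
proof -
  have "(\<Sum>x<n. std_basis i x * f x) = (\<Sum>x<n. if x = i then f i else 0)"
    by (rule sum.cong) (auto simp: std_basis_def)
  with assms show ?thesis by simp
qed

lemma sum_std_basis_squares: "i < n \<Longrightarrow> (\<Sum>x<n. (std_basis i x)\<^sup>2) = 1"
  using sum_std_basis_mult[of i n "std_basis i"] by (simp add: power2_eq_square std_basis_def)

lemma contract_std_basis: "i < n \<Longrightarrow> contract n 0 (std_basis i) A xs = A (i # xs)"
  by (simp add: contract_def sum_std_basis_mult)

section \<open>Symmetric orthogonal tensors live in dimension at most two\<close>

lemma orth_tensor3_contract:
  assumes "orth_tensor n 3 A" "(\<Sum>i<n. (u i)\<^sup>2) = 1"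
  shows "orth_matrix n (\<lambda>j k. \<Sum>i<n. u i * A [i, j, k])"
proof -
  have "orth_matrix n (\<lambda>j k. contract n 0 u A [j, k])"
    using assms by (simp add: numeral_3_eq_3)
  then show ?thesis by (simp add: contract_def)
qed

lemma orth_tensor3_slice:
  assumes "orth_tensor n 3 A" "i < n" "j < n" "l < n"
  shows "(\<Sum>m<n. A [i, j, m] * A [i, l, m]) = (if j = l then 1 else 0)"
  using orth_tensor3_contract[OF assms(1) sum_std_basis_squares[OF assms(2)]] assms(2-4)
  unfolding orth_matrix_def by (simp add: sum_std_basis_mult)

lemma orth_tensor3_slices_anticommute:
  assumes O: "orth_tensor n 3 A" and "i < n" "p < n" "i \<noteq> p" "j < n" "l < n"
  shows "(\<Sum>m<n. A [i, j, m] * A [p, l, m] + A [p, j, m] * A [i, l, m]) = 0"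
proof -
  define u where "u x = (std_basis i x + std_basis p x) / sqrt 2" for x
  have u_mult: "(\<Sum>x<n. u x * f x) = (f i + f p) / sqrt 2" for f
  proof -
    have "(\<Sum>x<n. u x * f x)
        = ((\<Sum>x<n. std_basis i x * f x) + (\<Sum>x<n. std_basis p x * f x)) / sqrt 2"
      unfolding u_def sum.distrib[symmetric] sum_divide_distrib
      by (rule sum.cong) (simp_all add: field_simps)
    with assms show ?thesis by (simp add: sum_std_basis_mult)
  qed
  have u_unit: "(\<Sum>x<n. (u x)\<^sup>2) = 1"
    using u_mult[of u] assms by (simp add: power2_eq_square u_def std_basis_def)
  have "orth_matrix n (\<lambda>j k. (A [i, j, k] + A [p, j, k]) / sqrt 2)"
    using orth_tensor3_contract[OF O u_unit] by (simp add: u_mult)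
  then have "(\<Sum>m<n. (A [i, j, m] + A [p, j, m]) * (A [i, l, m] + A [p, l, m])) / 2
      = (if j = l then 1 else 0)"
    using assms unfolding orth_matrix_def by (simp add: sum_divide_distrib)
  moreover have "(\<Sum>m<n. (A [i, j, m] + A [p, j, m]) * (A [i, l, m] + A [p, l, m]))
      = (\<Sum>m<n. A [i, j, m] * A [i, l, m]) + (\<Sum>m<n. A [p, j, m] * A [p, l, m])
      + (\<Sum>m<n. A [i, j, m] * A [p, l, m] + A [p, j, m] * A [i, l, m])"
    by (simp add: algebra_simps sum.distrib)
  ultimately show ?thesis
    using orth_tensor3_slice[OF O] assms by (simp split: if_splits)
qed

lemma sym_tensor3_swap:
  assumes "sym_tensor n 3 A" "i < n" "j < n" "k < n"
  shows "A [i, j, k] = A [j, i, k]" and "A [i, j, k] = A [i, k, j]"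
proof -
  have "[i, j, k] \<in> tidx n 3" "[j, i, k] \<in> tidx n 3" "[i, k, j] \<in> tidx n 3"
    using assms(2-4) by (simp_all add: tidx_def)
  moreover have "mset [i, j, k] = mset [j, i, k]" "mset [i, j, k] = mset [i, k, j]"
    by (simp_all add: add_mset_commute)
  ultimately show "A [i, j, k] = A [j, i, k]" and "A [i, j, k] = A [i, k, j]"
    using assms(1) unfolding sym_tensor_def by blast+
qed

lemma sym_orth_tensor3_slice_products_vanish:
  assumes S: "sym_tensor n 3 A" and O: "orth_tensor n 3 A"
    and "a < n" "b < n" "c < n" "l < n" "a \<noteq> b" "b \<noteq> c" "a \<noteq> c"
  shows "(\<Sum>m<n. A [a, l, m] * A [b, m, c]) = 0"
proof -
  define P where "P a b c = (\<Sum>m<n. A [a, l, m] * A [b, m, c])" for a b c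
  have anti: "P a b c = - P b a c" if "a < n" "b < n" "c < n" "a \<noteq> b" for a b c
  proof -
    have "P a b c + P b a c = (\<Sum>m<n. A [a, l, m] * A [b, c, m] + A [b, l, m] * A [a, c, m])"
      unfolding P_def sum.distrib[symmetric] using that \<open>l < n\<close>
      by (intro sum.cong refl) (metis lessThan_iff sym_tensor3_swap(2)[OF S])
    also have "\<dots> = 0"
      using orth_tensor3_slices_anticommute[OF O] that \<open>l < n\<close> by blast
    finally show ?thesis by simp
  qed
  have swap: "P a b c = P a c b" if "b < n" "c < n" for a b c
    unfolding P_def using that
    by (intro sum.cong refl) (metis lessThan_iff sym_tensor3_swap[OF S])
  \<comment> \<open>Running through the six permutations of a, b, c flips the sign three times.\<close>
  have "P a b c = 0"
    using anti[of a b c] anti[of b c a] anti[of c a b] swap[of a c b] swap[of b a c] swap[of c b a]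
      assms by auto
  then show ?thesis unfolding P_def .
qed

lemma sym_orth_tensor3_dim_le_2:
  assumes S: "sym_tensor n 3 A" and O: "orth_tensor n 3 A"
  shows "n \<le> 2"
proof (rule ccontr)
  assume "\<not> n \<le> 2"
  then have n: "0 < n" "1 < n" "2 < n" by auto
  have row_zero: "A [1, q, 2] = 0" if "q < n" for q
  proof -
    have "A [1, q, 2] = (\<Sum>m<n. std_basis q m * A [1, m, 2])"
      using that by (simp add: sum_std_basis_mult)
    also have "\<dots> = (\<Sum>m<n. \<Sum>l<n. A [0, q, l] * (A [0, l, m] * A [1, m, 2]))"
      unfolding sum_distrib_right
    proof (intro sum.cong refl)
      fix m assume "m \<in> {..<n}"
      then have "std_basis q m = (\<Sum>l<n. A [0, q, l] * A [0, m, l])"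
        using orth_tensor3_slice[OF O n(1) that] by (auto simp: std_basis_def)
      also have "\<dots> = (\<Sum>l<n. A [0, q, l] * A [0, l, m])"
        using \<open>m \<in> {..<n}\<close> n(1)
        by (intro sum.cong refl) (metis lessThan_iff sym_tensor3_swap(2)[OF S])
      finally show "std_basis q m * A [1, m, 2] = (\<Sum>l<n. A [0, q, l] * (A [0, l, m] * A [1, m, 2]))"
        by (simp add: sum_distrib_right mult.assoc)
    qed
    also have "\<dots> = (\<Sum>l<n. A [0, q, l] * (\<Sum>m<n. A [0, l, m] * A [1, m, 2]))"
      by (subst sum.swap) (simp add: sum_distrib_left)
    also have "\<dots> = 0"
      using sym_orth_tensor3_slice_products_vanish[OF S O n] by simp
    finally show ?thesis .
  qed
  have "(\<Sum>m<n. A [1, 2, m] * A [1, 2, m]) = 1"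
    using orth_tensor3_slice[OF O n(2) n(3) n(3)] by simp
  moreover have "A [1, 2, m] = 0" if "m < n" for m
    using row_zero[OF that] sym_tensor3_swap(2)[OF S n(2) n(3) that] by simp
  ultimately show False by simp
qed

lemma sym_orth_tensor_descend_to_order3:
  assumes "3 \<le> d" "0 < n" "sym_tensor n d A" "orth_tensor n d A"
  shows "\<exists>B. sym_tensor n 3 B \<and> orth_tensor n 3 B"
  using assms
proof (induction d arbitrary: A rule: nat_induct_at_least)
  case (Suc d)
  have "sym_tensor n d (contract n 0 (std_basis 0) A)"
    "orth_tensor n d (contract n 0 (std_basis 0) A)"
    using Suc sym_tensor_contract orth_tensor_contract sum_std_basis_squares by auto
  with Suc show ?case by blast
qed blast

lemma sym_orth_tensor_dim_le_2:
  assumes "3 \<le> d" "sym_tensor n d A" "orth_tensor n d A"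
  shows "n \<le> 2"
  using sym_orth_tensor_descend_to_order3[OF assms(1) _ assms(2,3)] sym_orth_tensor3_dim_le_2
  by (cases "n = 0") auto

section \<open>Dimension two: Chebyshev tensors\<close>

text \<open>The symmetric tensor of the binary form \<open>Re (\<gamma> (x\<^sub>1 + i x\<^sub>2)\<^sup>d)\<close>; for \<open>\<gamma> = 1\<close> this is
  the Chebyshev form \<open>Ch\<^sub>d\<^sub>,\<^sub>2\<close>.\<close>
definition chebyshev_tensor :: "complex \<Rightarrow> nat list \<Rightarrow> real" where
  "chebyshev_tensor \<gamma> xs = Re (\<gamma> * \<i> ^ count (mset xs) 1)"

lemma A0_eq_chebyshev_tensor: "A0 = chebyshev_tensor 1"
proof
  fix xs :: "nat list"
  let ?m = "count (mset xs) 1"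
  show "A0 xs = chebyshev_tensor 1 xs"
  proof (cases "even ?m")
    case False
    then obtain q where "?m = 2 * q + 1"
      using oddE by blast
    with False show ?thesis
      by (simp add: A0_def chebyshev_tensor_def Let_def power_add power_mult)
  qed (simp add: A0_def chebyshev_tensor_def Let_def)
qed

lemma contract_chebyshev_tensor:
  "contract 2 j u (chebyshev_tensor \<gamma>) = chebyshev_tensor (\<gamma> * Complex (u 0) (u 1))"
proof
  fix xs :: "nat list"
  let ?c = "count (mset xs) 1"
  have "contract 2 j u (chebyshev_tensor \<gamma>) xs = u 0 * Re (\<gamma> * \<i> ^ ?c) + u 1 * Re (\<gamma> * \<i> ^ Suc ?c)"
    unfolding contract_def chebyshev_tensor_def mset_insert_nth by (simp add: numeral_2_eq_2)
  also have "\<dots> = chebyshev_tensor (\<gamma> * Complex (u 0) (u 1)) xs"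
    by (simp add: chebyshev_tensor_def Complex_eq algebra_simps)
  finally show "contract 2 j u (chebyshev_tensor \<gamma>) xs
      = chebyshev_tensor (\<gamma> * Complex (u 0) (u 1)) xs" .
qed

lemma orth_tensor_chebyshev_tensor:
  assumes "cmod \<gamma> = 1" "2 \<le> d"
  shows "orth_tensor 2 d (chebyshev_tensor \<gamma>)"
proof -
  obtain k where d: "d = Suc (Suc k)"
    using assms(2) by (metis add_2_eq_Suc le_Suc_ex)
  have "orth_tensor 2 (Suc (Suc k)) (chebyshev_tensor \<gamma>)" if "cmod \<gamma> = 1" for \<gamma>
    using that
  proof (induction k arbitrary: \<gamma>)
    case 0
    then have "(Re \<gamma>)\<^sup>2 + (Im \<gamma>)\<^sup>2 = 1"
      using cmod_power2[of \<gamma>] by simp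
    then show ?case
      by (auto simp: orth_matrix_def chebyshev_tensor_def less_2_cases_iff numeral_2_eq_2
          power2_eq_square algebra_simps)
  next
    case (Suc k)
    have "cmod (\<gamma> * Complex (u 0) (u 1)) = 1" if "(\<Sum>i<2::nat. (u i)\<^sup>2) = 1" for u
      using that Suc.prems by (simp add: norm_mult complex_norm numeral_2_eq_2)
    with Suc.IH show ?case
      by (simp add: contract_chebyshev_tensor)
  qed
  with assms(1) d show ?thesis by blast
qed

lemma sym_orth_tensor3_chebyshev:
  assumes S: "sym_tensor 2 3 A" and O: "orth_tensor 2 3 A"
  obtains \<gamma> where "cmod \<gamma> = 1" "\<forall>xs\<in>tidx 2 3. A xs = chebyshev_tensor \<gamma> xs"
proof -
  define a where "a m = A (replicate (3 - m) 0 @ replicate m 1)" for m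
  have val: "A [x, y, z] = a (x + y + z)" if "x < 2" "y < 2" "z < 2" for x y z
  proof -
    have "[x, y, z] \<in> tidx 2 3" "replicate (3 - (x + y + z)) 0 @ replicate (x + y + z) 1 \<in> tidx 2 3"
      using that by (auto simp: tidx_def)
    moreover have
      "mset [x, y, z] = mset (replicate (3 - (x + y + z)) (0::nat) @ replicate (x + y + z) 1)"
      using that by (auto simp: less_2_cases_iff numeral_3_eq_3)
    ultimately show ?thesis
      using S unfolding sym_tensor_def a_def by blast
  qed
  have sum2: "(\<Sum>m<2. f m) = f 0 + f 1" for f :: "nat \<Rightarrow> real"
    by (simp add: numeral_2_eq_2)
  have slice: "A [i, j, 0] * A [i, l, 0] + A [i, j, 1] * A [i, l, 1] = (if j = l then 1 else 0)"
    if "i < 2" "j < 2" "l < 2" for i j l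
    using orth_tensor3_slice[OF O that] by (simp only: sum2)
  have E: "a 0 * a 0 + a 1 * a 1 = 1" "a 0 * a 1 + a 1 * a 2 = 0" "a 1 * a 1 + a 2 * a 2 = 1"
    "a 1 * a 2 + a 2 * a 3 = 0"
    using slice[of 0 0 0] slice[of 0 0 1] slice[of 0 1 1] slice[of 1 0 1]
    by (simp_all add: val numeral_2_eq_2 numeral_3_eq_3)
  have anti: "a 0 * a 2 + a 1 * a 1 + (a 1 * a 3 + a 2 * a 2) = 0"
    using orth_tensor3_slices_anticommute[OF O, of 0 1 0 1]
    by (simp add: sum2 val numeral_2_eq_2 numeral_3_eq_3)
  have unit: "(a 0)\<^sup>2 + (a 1)\<^sup>2 = 1"
    using E(1) by (simp add: power2_eq_square)
  have a2: "a 2 = - a 0" and a3: "a 3 = - a 1"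
  proof (atomize (full), cases "a 1 = 0")
    case True
    then have "a 2 \<noteq> 0"
      using E(3) by auto
    moreover have "a 2 * a 3 = 0" "a 2 * (a 0 + a 2) = 0"
      using E(4) anti True by (simp_all add: algebra_simps)
    ultimately show "a 2 = - a 0 \<and> a 3 = - a 1"
      using True by simp
  next
    case False
    moreover have "a 1 * (a 0 + a 2) = 0"
      using E(2) by (simp add: algebra_simps)
    ultimately have "a 0 + a 2 = 0"
      by simp
    moreover from this have "a 1 * (a 1 + a 3) = 0"
      using anti by (simp add: algebra_simps eq_neg_iff_add_eq_0[symmetric])
    ultimately show "a 2 = - a 0 \<and> a 3 = - a 1"
      using False by simp
  qed
  define \<gamma> where "\<gamma> = Complex (a 0) (- a 1)"
  have "cmod \<gamma> = 1"
    using unit by (simp add: \<gamma>_def complex_norm)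
  moreover have "A xs = chebyshev_tensor \<gamma> xs" if "xs \<in> tidx 2 3" for xs
  proof -
    have "length xs = Suc (Suc (Suc 0))" "set xs \<subseteq> {..<2}"
      using that by (simp_all add: tidx_def)
    then obtain x y z where xs: "xs = [x, y, z]" "x < 2" "y < 2" "z < 2"
      by (auto simp: length_Suc_conv)
    then have "x + y + z \<in> {0, 1, 2, 3}" "count (mset xs) 1 = x + y + z"
      by (auto simp: less_2_cases_iff)
    then show ?thesis
      using xs val a2 a3 by (auto simp: chebyshev_tensor_def \<gamma>_def Complex_eq power3_eq_cube)
  qed
  ultimately show ?thesis using that by blast
qed

lemma sym_tensor_chebyshev_from_slices:
  assumes S: "sym_tensor 2 (Suc d) A" and "2 \<le> d"
    and slice0: "\<forall>xs\<in>tidx 2 d. A (0 # xs) = chebyshev_tensor \<gamma> xs"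
    and slice1: "\<forall>xs\<in>tidx 2 d. A (1 # xs) = chebyshev_tensor \<gamma>' xs"
  shows "\<forall>xs\<in>tidx 2 (Suc d). A xs = chebyshev_tensor \<gamma> xs"
proof -
  define r where "r = replicate (d - 2) (0::nat)"
  have r: "x # y # r \<in> tidx 2 d" if "x < 2" "y < 2" for x y
    using that \<open>2 \<le> d\<close> by (auto simp: r_def tidx_def)
  have swap: "A (1 # x # y # r) = A (x # 1 # y # r)" if "x < 2" "y < 2" for x y
  proof -
    have "1 # x # y # r \<in> tidx 2 (Suc d)" "x # 1 # y # r \<in> tidx 2 (Suc d)"
      using that r by (simp_all add: Cons_in_tidx)
    moreover have "mset (1 # x # y # r) = mset (x # 1 # y # r)"
      by (simp add: add_mset_commute)
    ultimately show ?thesis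
      using S unfolding sym_tensor_def by blast
  qed
  have "A (1 # 0 # 0 # r) = Re \<gamma>'" "A (0 # 1 # 0 # r) = - Im \<gamma>"
    "A (1 # 0 # 1 # r) = - Im \<gamma>'" "A (0 # 1 # 1 # r) = - Re \<gamma>"
    using slice0 slice1 r[of 0 0] r[of 1 0] r[of 0 1] r[of 1 1]
    by (simp_all add: chebyshev_tensor_def r_def)
  then have "Re \<gamma>' = - Im \<gamma>" "Im \<gamma>' = Re \<gamma>"
    using swap[of 0 0] swap[of 0 1] by simp_all
  then have \<gamma>': "\<gamma>' = \<i> * \<gamma>"
    by (simp add: complex_eq_iff)
  show ?thesis
  proof
    fix xs assume "xs \<in> tidx 2 (Suc d)"
    then obtain x ys where xs: "xs = x # ys" "x = 0 \<or> x = 1" and ys: "ys \<in> tidx 2 d"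
      by (auto simp: tidx_Suc less_2_cases_iff)
    have "A (0 # ys) = chebyshev_tensor \<gamma> (0 # ys)" "A (1 # ys) = chebyshev_tensor \<gamma> (1 # ys)"
      using slice0 slice1 ys by (simp_all add: chebyshev_tensor_def \<gamma>' ac_simps)
    with xs show "A xs = chebyshev_tensor \<gamma> xs"
      by auto
  qed
qed

lemma sym_orth_tensor2_chebyshev:
  assumes "3 \<le> d" "sym_tensor 2 d A" "orth_tensor 2 d A"
  shows "\<exists>\<gamma>. cmod \<gamma> = 1 \<and> (\<forall>xs\<in>tidx 2 d. A xs = chebyshev_tensor \<gamma> xs)"
  using assms
proof (induction d arbitrary: A rule: nat_induct_at_least)
  case base
  then obtain \<gamma> where "cmod \<gamma> = 1" "\<forall>xs\<in>tidx 2 3. A xs = chebyshev_tensor \<gamma> xs"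
    using sym_orth_tensor3_chebyshev by blast
  then show ?case by blast
next
  case (Suc d)
  have slice: "\<exists>\<gamma>. cmod \<gamma> = 1 \<and> (\<forall>xs\<in>tidx 2 d. A (i # xs) = chebyshev_tensor \<gamma> xs)"
    if "i < 2" for i
  proof -
    have "sym_tensor 2 d (contract 2 0 (std_basis i) A)"
      "orth_tensor 2 d (contract 2 0 (std_basis i) A)"
      using Suc sym_tensor_contract orth_tensor_contract sum_std_basis_squares[OF that] by auto
    then obtain \<gamma> where "cmod \<gamma> = 1"
      "\<forall>xs\<in>tidx 2 d. contract 2 0 (std_basis i) A xs = chebyshev_tensor \<gamma> xs"
      using Suc.IH by blast
    then show ?thesis
      using contract_std_basis[OF that] by auto
  qed
  obtain \<gamma> where "cmod \<gamma> = 1" and slice0: "\<forall>xs\<in>tidx 2 d. A (0 # xs) = chebyshev_tensor \<gamma> xs"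
    using slice[of 0] by auto
  obtain \<gamma>' where slice1: "\<forall>xs\<in>tidx 2 d. A (1 # xs) = chebyshev_tensor \<gamma>' xs"
    using slice[of 1] by auto
  have "2 \<le> d"
    using Suc.hyps by simp
  with Suc.prems(1) slice0 slice1 \<open>cmod \<gamma> = 1\<close> show ?case
    using sym_tensor_chebyshev_from_slices by blast
qed

lemma sym_tensor2_orth_iff_chebyshev:
  assumes "3 \<le> d" "sym_tensor 2 d A"
  shows "orth_tensor 2 d A \<longleftrightarrow> (\<exists>\<gamma>. cmod \<gamma> = 1 \<and> (\<forall>xs\<in>tidx 2 d. A xs = chebyshev_tensor \<gamma> xs))"
proof
  assume "\<exists>\<gamma>. cmod \<gamma> = 1 \<and> (\<forall>xs\<in>tidx 2 d. A xs = chebyshev_tensor \<gamma> xs)"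
  then obtain \<gamma> where "cmod \<gamma> = 1" "\<forall>xs\<in>tidx 2 d. A xs = chebyshev_tensor \<gamma> xs"
    by blast
  then have "orth_tensor 2 d A = orth_tensor 2 d (chebyshev_tensor \<gamma>)"
    by (intro orth_tensor_cong)
  with \<open>cmod \<gamma> = 1\<close> assms(1) show "orth_tensor 2 d A"
    using orth_tensor_chebyshev_tensor by simp
next
  assume "orth_tensor 2 d A"
  with assms show "\<exists>\<gamma>. cmod \<gamma> = 1 \<and> (\<forall>xs\<in>tidx 2 d. A xs = chebyshev_tensor \<gamma> xs)"
    by (rule sym_orth_tensor2_chebyshev)
qed

section \<open>The orbit of \<open>A0\<close> under \<open>O(2)\<close>\<close>

lemma orth_matrix_2_rotation_or_reflection:
  assumes "orth_matrix 2 \<rho>"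
  shows "(\<rho> 0 0)\<^sup>2 + (\<rho> 0 1)\<^sup>2 = 1"
    and "(\<rho> 1 0 = - \<rho> 0 1 \<and> \<rho> 1 1 = \<rho> 0 0) \<or> (\<rho> 1 0 = \<rho> 0 1 \<and> \<rho> 1 1 = - \<rho> 0 0)"
proof -
  define a b c e where "a = \<rho> 0 0" and "b = \<rho> 0 1" and "c = \<rho> 1 0" and "e = \<rho> 1 1"
  have E: "a\<^sup>2 + b\<^sup>2 = 1" "c\<^sup>2 + e\<^sup>2 = 1" "a * c + b * e = 0"
    using assms unfolding orth_matrix_def a_def b_def c_def e_def
    by (auto simp: numeral_2_eq_2 power2_eq_square dest!: spec[of _ 0] spec[of _ 1])
  then show "(\<rho> 0 0)\<^sup>2 + (\<rho> 0 1)\<^sup>2 = 1"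
    by (simp add: a_def b_def)
  define l where "l = a * e - b * c"
  have "c = c * (a\<^sup>2 + b\<^sup>2) - a * (a * c + b * e)" "e = e * (a\<^sup>2 + b\<^sup>2) - b * (a * c + b * e)"
    using E by simp_all
  then have ce: "c = - l * b" "e = l * a"
    unfolding l_def by (simp_all add: algebra_simps power2_eq_square)
  have "l\<^sup>2 = (a\<^sup>2 + b\<^sup>2) * (c\<^sup>2 + e\<^sup>2) - (a * c + b * e)\<^sup>2"
    unfolding l_def by (simp add: algebra_simps power2_eq_square)
  then have "l = 1 \<or> l = -1"
    using E by (simp add: power2_eq_1_iff)
  with ce show "(\<rho> 1 0 = - \<rho> 0 1 \<and> \<rho> 1 1 = \<rho> 0 0) \<or> (\<rho> 1 0 = \<rho> 0 1 \<and> \<rho> 1 1 = - \<rho> 0 0)"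
    unfolding a_def b_def c_def e_def by auto
qed

lemma tensor_act_chebyshev_tensor:
  "tensor_act 2 d \<rho> (chebyshev_tensor \<gamma>) xs
    = Re (\<gamma> * (\<Prod>k<d. Complex (\<rho> (xs ! k) 0) (\<rho> (xs ! k) 1)))"
proof -
  let ?w = "\<lambda>j::nat. if j = 1 then \<i> else 1"
  have "tensor_act 2 d \<rho> (chebyshev_tensor \<gamma>) xs
      = (\<Sum>js\<in>tidx 2 d. Re (\<gamma> * (\<Prod>k<d. of_real (\<rho> (xs ! k) (js ! k)) * ?w (js ! k))))"
    unfolding tensor_act_def
  proof (intro sum.cong refl)
    fix js assume "js \<in> tidx 2 d"
    then have "length js = d"
      by (simp add: tidx_def)
    then have cheb: "chebyshev_tensor \<gamma> js = Re (\<gamma> * (\<Prod>k<d. ?w (js ! k)))"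
      using prod_nth_if_eq[of js 1 \<i>] by (simp add: chebyshev_tensor_def)
    have "(\<Prod>k<d. of_real (\<rho> (xs ! k) (js ! k)) * ?w (js ! k))
        = of_real (\<Prod>k<d. \<rho> (xs ! k) (js ! k)) * (\<Prod>k<d. ?w (js ! k))"
      by (simp add: prod.distrib)
    then show "(\<Prod>k<d. \<rho> (xs ! k) (js ! k)) * chebyshev_tensor \<gamma> js
        = Re (\<gamma> * (\<Prod>k<d. of_real (\<rho> (xs ! k) (js ! k)) * ?w (js ! k)))"
      unfolding cheb by (simp add: algebra_simps del: of_real_prod)
  qed
  also have "\<dots> = Re (\<gamma> * (\<Sum>js\<in>tidx 2 d. \<Prod>k<d. of_real (\<rho> (xs ! k) (js ! k)) * ?w (js ! k)))"
    by (simp only: sum_distrib_left Re_sum)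
  also have "\<dots> = Re (\<gamma> * (\<Prod>k<d. \<Sum>j<2. of_real (\<rho> (xs ! k) j) * ?w j))"
    by (subst sum_tidx_prod) (rule refl)
  also have "\<dots> = Re (\<gamma> * (\<Prod>k<d. Complex (\<rho> (xs ! k) 0) (\<rho> (xs ! k) 1)))"
    by (simp add: numeral_2_eq_2 Complex_eq mult.commute)
  finally show ?thesis .
qed

lemma prod_rows_eq_power:
  assumes "xs \<in> tidx 2 d"
    and rows: "\<And>j. j < 2 \<Longrightarrow> Complex (\<rho> j 0) (\<rho> j 1) = r * (if j = 1 then w else 1)"
  shows "(\<Prod>k<d. Complex (\<rho> (xs ! k) 0) (\<rho> (xs ! k) 1)) = r ^ d * w ^ count (mset xs) 1"
proof -
  have "length xs = d" "\<forall>k<d. xs ! k < 2"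
    using assms(1) nth_mem by (fastforce simp: tidx_def)+
  then have "(\<Prod>k<d. Complex (\<rho> (xs ! k) 0) (\<rho> (xs ! k) 1))
      = (\<Prod>k<length xs. r * (if xs ! k = 1 then w else 1))"
    using rows by simp
  also have "\<dots> = r ^ length xs * w ^ count (mset xs) 1"
    by (simp add: prod.distrib prod_nth_if_eq)
  finally show ?thesis
    using \<open>length xs = d\<close> by simp
qed

lemma tensor_act_A0_chebyshev:
  assumes "orth_matrix 2 \<rho>"
  obtains \<gamma> where "cmod \<gamma> = 1" "\<forall>xs\<in>tidx 2 d. tensor_act 2 d \<rho> A0 xs = chebyshev_tensor \<gamma> xs"
proof -
  define r where "r = Complex (\<rho> 0 0) (\<rho> 0 1)"
  have r: "cmod r = 1"
    using orth_matrix_2_rotation_or_reflection(1)[OF assms] by (simp add: r_def complex_norm)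
  have act: "tensor_act 2 d \<rho> A0 xs = Re (r ^ d * w ^ count (mset xs) 1)"
    if "xs \<in> tidx 2 d" "\<And>j. j < 2 \<Longrightarrow> Complex (\<rho> j 0) (\<rho> j 1) = r * (if j = 1 then w else 1)" for xs w
    using prod_rows_eq_power[OF that]
    by (simp add: A0_eq_chebyshev_tensor tensor_act_chebyshev_tensor)
  consider "\<rho> 1 0 = - \<rho> 0 1" "\<rho> 1 1 = \<rho> 0 0" | "\<rho> 1 0 = \<rho> 0 1" "\<rho> 1 1 = - \<rho> 0 0"
    using orth_matrix_2_rotation_or_reflection(2)[OF assms] by blast
  then show ?thesis
  proof cases
    case 1
    then have rows: "Complex (\<rho> j 0) (\<rho> j 1) = r * (if j = 1 then \<i> else 1)" if "j < 2" for j
      using that by (auto simp: r_def less_2_cases_iff complex_eq_iff)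
    have "tensor_act 2 d \<rho> A0 xs = chebyshev_tensor (r ^ d) xs" if "xs \<in> tidx 2 d" for xs
      using act[OF that rows] by (simp add: chebyshev_tensor_def)
    with r show ?thesis
      using that[of "r ^ d"] by (simp add: norm_power)
  next
    case 2
    then have rows: "Complex (\<rho> j 0) (\<rho> j 1) = r * (if j = 1 then - \<i> else 1)" if "j < 2" for j
      using that by (auto simp: r_def less_2_cases_iff complex_eq_iff)
    have "Re (r ^ d * (- \<i>) ^ m) = Re (cnj r ^ d * \<i> ^ m)" for m
      by (metis complex_cnj_cnj complex_cnj_i complex_cnj_mult complex_cnj_power cnj.sel(1))
    then have "tensor_act 2 d \<rho> A0 xs = chebyshev_tensor (cnj r ^ d) xs" if "xs \<in> tidx 2 d" for xs
      using act[OF that rows] by (simp only: chebyshev_tensor_def)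
    with r show ?thesis
      using that[of "cnj r ^ d"] by (simp add: norm_power)
  qed
qed

lemma chebyshev_tensor_in_orbit_A0:
  assumes "cmod \<gamma> = 1" "0 < d"
  obtains \<rho> where "orth_matrix 2 \<rho>" "\<forall>xs\<in>tidx 2 d. chebyshev_tensor \<gamma> xs = tensor_act 2 d \<rho> A0 xs"
proof -
  obtain r where \<gamma>: "\<gamma> = r ^ d"
    using exists_complex_root[of d \<gamma>] assms(2) by auto
  then have "cmod r ^ d = 1"
    using assms(1) by (simp add: norm_power)
  then have "cmod r = 1"
    using power_eq_1_iff[of "cmod r" d] assms(2) by simp
  then have unit: "(Re r)\<^sup>2 + (Im r)\<^sup>2 = 1"
    using cmod_power2[of r] by simp
  define \<rho> where
    "\<rho> j k = (if j = 1 then (if k = 0 then - Im r else Re r) else (if k = 0 then Re r else Im r))"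
    for j k :: nat
  have "orth_matrix 2 \<rho>"
    using unit
    by (auto simp: orth_matrix_def \<rho>_def numeral_2_eq_2 less_Suc_eq power2_eq_square algebra_simps)
  moreover have rows: "Complex (\<rho> j 0) (\<rho> j 1) = r * (if j = 1 then \<i> else 1)" if "j < 2" for j
    by (simp add: \<rho>_def complex_eq_iff)
  have "chebyshev_tensor \<gamma> xs = tensor_act 2 d \<rho> A0 xs" if "xs \<in> tidx 2 d" for xs
    using prod_rows_eq_power[OF that rows] \<gamma>
    by (simp add: A0_eq_chebyshev_tensor tensor_act_chebyshev_tensor chebyshev_tensor_def)
  ultimately show ?thesis
    using that by blast
qed

lemma orbit_A0_iff_chebyshev:
  assumes "0 < d"
  shows "(\<exists>\<rho>. orth_matrix 2 \<rho> \<and> (\<forall>xs\<in>tidx 2 d. A xs = tensor_act 2 d \<rho> A0 xs))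
     \<longleftrightarrow> (\<exists>\<gamma>. cmod \<gamma> = 1 \<and> (\<forall>xs\<in>tidx 2 d. A xs = chebyshev_tensor \<gamma> xs))"
proof
  assume "\<exists>\<rho>. orth_matrix 2 \<rho> \<and> (\<forall>xs\<in>tidx 2 d. A xs = tensor_act 2 d \<rho> A0 xs)"
  then obtain \<rho> where "orth_matrix 2 \<rho>" "\<forall>xs\<in>tidx 2 d. A xs = tensor_act 2 d \<rho> A0 xs"
    by blast
  then show "\<exists>\<gamma>. cmod \<gamma> = 1 \<and> (\<forall>xs\<in>tidx 2 d. A xs = chebyshev_tensor \<gamma> xs)"
    by (metis tensor_act_A0_chebyshev)
next
  assume "\<exists>\<gamma>. cmod \<gamma> = 1 \<and> (\<forall>xs\<in>tidx 2 d. A xs = chebyshev_tensor \<gamma> xs)"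
  then obtain \<gamma> where "cmod \<gamma> = 1" "\<forall>xs\<in>tidx 2 d. A xs = chebyshev_tensor \<gamma> xs"
    by blast
  then show "\<exists>\<rho>. orth_matrix 2 \<rho> \<and> (\<forall>xs\<in>tidx 2 d. A xs = tensor_act 2 d \<rho> A0 xs)"
    by (metis chebyshev_tensor_in_orbit_A0 assms)
qed

theorem proposition1p6:
  fixes d n :: nat
  assumes "d \<ge> 3"
  shows "(\<forall>A. n \<ge> 1 \<and> sym_tensor n d A \<and> orth_tensor n d A \<longrightarrow> n = 1 \<or> n = 2)
       \<and> (\<forall>A. sym_tensor 2 d A \<longrightarrow>
            (orth_tensor 2 d A \<longleftrightarrow>
              (\<exists>\<rho>. orth_matrix 2 \<rho> \<and> (\<forall>is \<in> tidx 2 d. A is = tensor_act 2 d \<rho> A0 is))))"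
proof (intro conjI allI impI)
  fix A assume "n \<ge> 1 \<and> sym_tensor n d A \<and> orth_tensor n d A"
  with sym_orth_tensor_dim_le_2[OF assms] show "n = 1 \<or> n = 2"
    by fastforce
next
  fix A assume "sym_tensor 2 d A"
  with assms show "orth_tensor 2 d A \<longleftrightarrow>
      (\<exists>\<rho>. orth_matrix 2 \<rho> \<and> (\<forall>is \<in> tidx 2 d. A is = tensor_act 2 d \<rho> A0 is))"
    using sym_tensor2_orth_iff_chebyshev orbit_A0_iff_chebyshev by simp
qed

end
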